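(* Let $\lambda>0$ and let $\mathcal{H}=L^2(\mathbb{R})$ with orthonormal basis $\{|n\rangle\}_{n\in\mathbb{N}}$ (the eigenvectors of the quantum harmonic oscillator). Let $D\subset\mathcal{H}$ be the linear span of the $|n\rangle$, and let $D\odot D\subset \mathcal{H}\otimes\mathcal{H}$ be the algebraic tensor product. Define on $D$ the operators $a|n\rangle=\lambda\sqrt{n}\,|n-1\rangle$, $a^*|n\rangle=\lambda\sqrt{n+1}\,|n+1\rangle$, $q_1=\frac{1}{\sqrt2}(a+a^* )$, $q_2=\frac{1}{i\sqrt2}(a-a^* )$, and on $D\odot D$ the operator $$L^2=\sum_{\mu=1}^2\big(q_\mu\otimes\mathbb{I}-\mathbb{I}\otimes q_\mu\big)^2 .$$ For unit vectors $\psi,\varphi\in D$, write $\omega_\psi$ for the vector state $\omega_\psi(A)=\langle\psi,A\psi\rangle$, set $$d_{L^2}(\omega_\psi,\omega_\varphi)=\langle \psi\otimes\varphi,\,L^2\,(\psi\otimes\varphi)\rangle,$$ and define the modified quantum length $$d'_L(\omega_\psi,\omega_\varphi)=\sqrt{\Big|\,d_{L^2}(\omega_\psi,\omega_\varphi)-\sqrt{d_{L^2}(\omega_\psi,\omega_\psi)\,d_{L^2}(\omega_\varphi,\omega_\varphi)}\,\Big|}.$$ Then there is no self-adjoint operator $T$ on $\mathcal{H}\otimes\mathcal{H}$ whose domain contains $D\odot D$ such that $$\langle \psi\otimes\varphi,\,T\,(\psi\otimes\varphi)\rangle = d'_L(\omega_\psi,\omega_\varphi)^2$$ for all unit vectors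 $\psi,\varphi\in D$.
   Context: Here $\lambda$ plays the role of the Planck length $\lambda_P$; $a,a^*$ satisfy $[a,a^*]=\lambda^2\mathbb{I}$, and $H=\frac12(q_1^2+q_2^2)$ has eigenvalues $E_m=\lambda^2(m+\frac12)$ on $|m\rangle$. The operator $L^2$ is the square of the length operator $L=\sqrt{\sum_\mu (dq_\mu)^2}$ with $dq_\mu=q_\mu\otimes\mathbb{I}-\mathbb{I}\otimes q_\mu$ of the Moyal (quantum) plane; vector states $\omega_\psi$ are pure states of the algebra of compact operators on $L^2(\mathbb{R})$. *)

theory Defs
  imports "HOL-Analysis.Analysis"
begin

text \<open>The Hilbert space L2(R) is identified with l2(N) via the orthonormal basis of
  harmonic oscillator eigenvectors |n>; a vector is the sequence of its coefficients.
  H (x) H is correspondingly identified with l2(N x N).\<close>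

definition l2_space :: "('i \<Rightarrow> complex) set" where
  "l2_space = {f. (\<lambda>x. (cmod (f x))\<^sup>2) summable_on UNIV}"

definition l2_inner :: "('i \<Rightarrow> complex) \<Rightarrow> ('i \<Rightarrow> complex) \<Rightarrow> complex" where
  "l2_inner f g = infsum (\<lambda>x. cnj (f x) * g x) UNIV"

definition l2_norm :: "('i \<Rightarrow> complex) \<Rightarrow> real" where
  "l2_norm f = sqrt (infsum (\<lambda>x. (cmod (f x))\<^sup>2) UNIV)"

text \<open>D: linear span of the basis vectors |n> (finitely supported coefficient sequences).\<close>
definition finspan_D :: "(nat \<Rightarrow> complex) set" where
  "finspan_D = {\<psi>. finite {n. \<psi> n \<noteq> 0}}"

definition tensor :: "(nat \<Rightarrow> complex) \<Rightarrow> (nat \<Rightarrow> complex) \<Rightarrow> (nat \<times> nat \<Rightarrow> complex)" where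
  "tensor \<psi> \<phi> = (\<lambda>(m, n). \<psi> m * \<phi> n)"

definition alg_tensor :: "(nat \<Rightarrow> complex) set \<Rightarrow> (nat \<times> nat \<Rightarrow> complex) set" where
  "alg_tensor V = {F. \<exists>(k::nat) \<psi>s \<phi>s. (\<forall>i<k. \<psi>s i \<in> V \<and> \<phi>s i \<in> V) \<and>
       F = (\<lambda>x. \<Sum>i<k. tensor (\<psi>s i) (\<phi>s i) x)}"

text \<open>a|n> = lam sqrt n |n-1>,  a*|n> = lam sqrt(n+1) |n+1>, in coefficients.\<close>
definition ann_op :: "real \<Rightarrow> (nat \<Rightarrow> complex) \<Rightarrow> (nat \<Rightarrow> complex)" where
  "ann_op lam \<psi> = (\<lambda>n. complex_of_real (lam * sqrt (real (Suc n))) * \<psi> (Suc n))"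

definition cre_op :: "real \<Rightarrow> (nat \<Rightarrow> complex) \<Rightarrow> (nat \<Rightarrow> complex)" where
  "cre_op lam \<psi> = (\<lambda>n. if n = 0 then 0 else complex_of_real (lam * sqrt (real n)) * \<psi> (n - 1))"

definition q1_op :: "real \<Rightarrow> (nat \<Rightarrow> complex) \<Rightarrow> (nat \<Rightarrow> complex)" where
  "q1_op lam \<psi> = (\<lambda>n. (ann_op lam \<psi> n + cre_op lam \<psi> n) / complex_of_real (sqrt 2))"

definition q2_op :: "real \<Rightarrow> (nat \<Rightarrow> complex) \<Rightarrow> (nat \<Rightarrow> complex)" where
  "q2_op lam \<psi> = (\<lambda>n. (ann_op lam \<psi> n - cre_op lam \<psi> n) / (\<i> * complex_of_real (sqrt 2)))"

definition left_op :: "((nat \<Rightarrow> complex) \<Rightarrow> (nat \<Rightarrow> complex)) \<Rightarrow> (nat \<times> nat \<Rightarrow> complex) \<Rightarrow> (nat \<times> nat \<Rightarrow> complex)" where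
  "left_op A F = (\<lambda>(m, n). A (\<lambda>m'. F (m', n)) m)"

definition right_op :: "((nat \<Rightarrow> complex) \<Rightarrow> (nat \<Rightarrow> complex)) \<Rightarrow> (nat \<times> nat \<Rightarrow> complex) \<Rightarrow> (nat \<times> nat \<Rightarrow> complex)" where
  "right_op A F = (\<lambda>(m, n). A (\<lambda>n'. F (m, n')) n)"

definition dq_op :: "((nat \<Rightarrow> complex) \<Rightarrow> (nat \<Rightarrow> complex)) \<Rightarrow> (nat \<times> nat \<Rightarrow> complex) \<Rightarrow> (nat \<times> nat \<Rightarrow> complex)" where
  "dq_op A F = (\<lambda>x. left_op A F x - right_op A F x)"

definition L2_op :: "real \<Rightarrow> (nat \<times> nat \<Rightarrow> complex) \<Rightarrow> (nat \<times> nat \<Rightarrow> complex)" where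
  "L2_op lam F = (\<lambda>x. dq_op (q1_op lam) (dq_op (q1_op lam) F) x
                    + dq_op (q2_op lam) (dq_op (q2_op lam) F) x)"

definition d_L2 :: "real \<Rightarrow> (nat \<Rightarrow> complex) \<Rightarrow> (nat \<Rightarrow> complex) \<Rightarrow> complex" where
  "d_L2 lam \<psi> \<phi> = l2_inner (tensor \<psi> \<phi>) (L2_op lam (tensor \<psi> \<phi>))"

definition d_L_mod :: "real \<Rightarrow> (nat \<Rightarrow> complex) \<Rightarrow> (nat \<Rightarrow> complex) \<Rightarrow> real" where
  "d_L_mod lam \<psi> \<phi> =
     sqrt (cmod (d_L2 lam \<psi> \<phi> - csqrt (d_L2 lam \<psi> \<psi> * d_L2 lam \<phi> \<phi>)))"

text \<open>(Possibly unbounded) self-adjoint operator on l2(I) with domain Dom: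
  Dom is a dense linear subspace, T is linear on Dom, and T equals its adjoint
  (the adjoint domain equals Dom and T is symmetric on Dom).\<close>
definition self_adjoint_on :: "('i \<Rightarrow> complex) set \<Rightarrow> (('i \<Rightarrow> complex) \<Rightarrow> ('i \<Rightarrow> complex)) \<Rightarrow> bool" where
  "self_adjoint_on Dom T \<longleftrightarrow>
     Dom \<subseteq> l2_space \<and> (\<lambda>_. 0) \<in> Dom \<and>
     (\<forall>f\<in>Dom. \<forall>g\<in>Dom. (\<lambda>x. f x + g x) \<in> Dom) \<and>
     (\<forall>c. \<forall>f\<in>Dom. (\<lambda>x. c * f x) \<in> Dom) \<and>
     (\<forall>f\<in>l2_space. \<forall>e>0. \<exists>g\<in>Dom. l2_norm (\<lambda>x. f x - g x) < e) \<and>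
     (\<forall>f\<in>Dom. T f \<in> l2_space) \<and>
     (\<forall>f\<in>Dom. \<forall>g\<in>Dom. T (\<lambda>x. f x + g x) = (\<lambda>x. T f x + T g x)) \<and>
     (\<forall>c. \<forall>f\<in>Dom. T (\<lambda>x. c * f x) = (\<lambda>x. c * T f x)) \<and>
     (\<forall>f\<in>Dom. \<forall>g\<in>Dom. l2_inner (T f) g = l2_inner f (T g)) \<and>
     (\<forall>y\<in>l2_space. (\<exists>z\<in>l2_space. \<forall>x\<in>Dom. l2_inner (T x) y = l2_inner x z) \<longrightarrow> y \<in> Dom)"

end

theory Submission
  imports Defs
begin

(* A linear operator T gives a quadratic form Q(x) = <x, T x>, so rotating two vectors u, v
   into (u + v)/sqrt 2 and (u - v)/sqrt 2 preserves Q(u) + Q(v).  On u = |0>|0> and v = |1>|0>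
   the required values of d'_L^2 are 0 and (4 - 2 sqrt 3) lam^2, while both rotated vectors are
   of the form psi (x) |0> with d'_L^2 = (3 - sqrt 6) lam^2; and 2 (3 - sqrt 6) <> 4 - 2 sqrt 3. *)

lemma l2_inner_finite_support:
  assumes "finite S" "\<And>x. x \<notin> S \<Longrightarrow> F x = 0"
  shows "l2_inner F G = (\<Sum>x\<in>S. cnj (F x) * G x)"
proof -
  have "l2_inner F G = infsum (\<lambda>x. cnj (F x) * G x) S"
    unfolding l2_inner_def by (rule infsum_cong_neutral) (use assms in auto)
  then show ?thesis
    using assms by simp
qed

lemma l2_norm_finite_support:
  assumes "finite S" "\<And>x. x \<notin> S \<Longrightarrow> f x = 0"
  shows "l2_norm f = sqrt (\<Sum>x\<in>S. (cmod (f x))\<^sup>2)"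
proof -
  have "infsum (\<lambda>x. (cmod (f x))\<^sup>2) UNIV = infsum (\<lambda>x. (cmod (f x))\<^sup>2) S"
    by (rule infsum_cong_neutral) (use assms in auto)
  then show ?thesis
    using assms unfolding l2_norm_def by simp
qed

definition complex_linear_on ::
  "('i \<Rightarrow> complex) set \<Rightarrow> (('i \<Rightarrow> complex) \<Rightarrow> ('i \<Rightarrow> complex)) \<Rightarrow> bool" where
  "complex_linear_on Dom T \<longleftrightarrow>
     (\<forall>f\<in>Dom. \<forall>g\<in>Dom. (\<lambda>x. f x + g x) \<in> Dom) \<and>
     (\<forall>c. \<forall>f\<in>Dom. (\<lambda>x. c * f x) \<in> Dom) \<and>
     (\<forall>f\<in>Dom. \<forall>g\<in>Dom. T (\<lambda>x. f x + g x) = (\<lambda>x. T f x + T g x)) \<and>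
     (\<forall>c. \<forall>f\<in>Dom. T (\<lambda>x. c * f x) = (\<lambda>x. c * T f x))"

lemma self_adjoint_on_imp_complex_linear_on:
  "self_adjoint_on Dom T \<Longrightarrow> complex_linear_on Dom T"
  unfolding self_adjoint_on_def complex_linear_on_def by blast

lemma complex_linear_on_combination:
  assumes "complex_linear_on Dom T" "f \<in> Dom" "g \<in> Dom"
  shows "T (\<lambda>x. a * f x + b * g x) = (\<lambda>x. a * T f x + b * T g x)"
proof -
  have "(\<lambda>x. a * f x) \<in> Dom" "(\<lambda>x. b * g x) \<in> Dom"
    using assms unfolding complex_linear_on_def by blast+
  with assms show ?thesis
    unfolding complex_linear_on_def by simp
qed

lemma quadratic_form_rotation:
  assumes T: "complex_linear_on Dom T" and "f \<in> Dom" "g \<in> Dom"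
    and "finite S" "\<And>x. x \<notin> S \<Longrightarrow> f x = 0" "\<And>x. x \<notin> S \<Longrightarrow> g x = 0"
    and c: "cnj c * c = 1/2" and d: "cnj d * d = 1/2"
  defines "r \<equiv> \<lambda>x. c * f x + d * g x" and "s \<equiv> \<lambda>x. c * f x + (- d) * g x"
  shows "l2_inner r (T r) + l2_inner s (T s) = l2_inner f (T f) + l2_inner g (T g)"
proof -
  have "l2_inner r (T r) + l2_inner s (T s)
      = (\<Sum>x\<in>S. cnj (r x) * T r x + cnj (s x) * T s x)"
    using assms by (simp add: l2_inner_finite_support sum.distrib)
  also have "\<dots> = (\<Sum>x\<in>S. 2 * (cnj c * c) * (cnj (f x) * T f x) + 2 * (cnj d * d) * (cnj (g x) * T g x))"
    unfolding r_def s_def complex_linear_on_combination[OF assms(1-3)]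
    by (rule sum.cong) (simp_all add: algebra_simps)
  also have "\<dots> = l2_inner f (T f) + l2_inner g (T g)"
    using assms by (simp add: c d l2_inner_finite_support sum.distrib)
  finally show ?thesis .
qed

definition ket :: "nat \<Rightarrow> nat \<Rightarrow> complex" where
  "ket n = (\<lambda>m. if m = n then 1 else 0)"

definition rotated_ket :: "complex \<Rightarrow> nat \<Rightarrow> complex" where
  "rotated_ket s = (\<lambda>m. complex_of_real (sqrt 2 / 2) * (ket 0 m + s * ket 1 m))"

lemma l2_norm_ket: "l2_norm (ket n) = 1"
  by (subst l2_norm_finite_support[of "{n}"]) (auto simp: ket_def)

lemma l2_norm_rotated_ket:
  assumes "s * cnj s = 1"
  shows "l2_norm (rotated_ket s) = 1"
proof -
  have "(cmod s)\<^sup>2 = 1"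
    using assms complex_norm_square[of s] by (metis of_real_eq_1_iff)
  then have "cmod s = 1"
    using norm_ge_zero[of s] by (auto simp: power2_eq_1_iff)
  have "l2_norm (rotated_ket s) = sqrt (\<Sum>n\<in>{0, 1}. (cmod (rotated_ket s n))\<^sup>2)"
    by (rule l2_norm_finite_support) (simp_all add: rotated_ket_def ket_def)
  also have "\<dots> = sqrt ((sqrt 2 / 2)\<^sup>2 + (sqrt 2 / 2)\<^sup>2)"
    using \<open>cmod s = 1\<close> by (simp add: rotated_ket_def ket_def norm_mult)
  also have "\<dots> = 1"
    by (simp add: power_divide)
  finally show ?thesis .
qed

lemma ket_in_finspan_D: "ket n \<in> finspan_D"
  by (simp add: finspan_D_def ket_def)

lemma rotated_ket_in_finspan_D: "rotated_ket s \<in> finspan_D"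
proof -
  have "{n. rotated_ket s n \<noteq> 0} \<subseteq> {0, 1}"
    by (auto simp: rotated_ket_def ket_def)
  then show ?thesis
    unfolding finspan_D_def by (simp add: finite_subset)
qed

lemma tensor_in_alg_tensor: "\<psi> \<in> V \<Longrightarrow> \<phi> \<in> V \<Longrightarrow> tensor \<psi> \<phi> \<in> alg_tensor V"
  unfolding alg_tensor_def
  by (rule CollectI, rule exI[of _ 1], rule exI[of _ "\<lambda>_. \<psi>"], rule exI[of _ "\<lambda>_. \<phi>"]) auto

lemma tensor_rotated_ket:
  "tensor (rotated_ket s) \<phi> = (\<lambda>x. complex_of_real (sqrt 2 / 2) * tensor (ket 0) \<phi> x
      + (complex_of_real (sqrt 2 / 2) * s) * tensor (ket 1) \<phi> x)"
  by (auto simp: fun_eq_iff tensor_def rotated_ket_def algebra_simps)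

lemma quadratic_form_rotated_ket:
  assumes T: "complex_linear_on Dom T" and "\<phi> \<in> finspan_D"
    and "tensor (ket 0) \<phi> \<in> Dom" "tensor (ket 1) \<phi> \<in> Dom" and s: "s * cnj s = 1"
  defines "Q \<equiv> \<lambda>\<psi>. l2_inner (tensor \<psi> \<phi>) (T (tensor \<psi> \<phi>))"
  shows "Q (rotated_ket s) + Q (rotated_ket (- s)) = Q (ket 0) + Q (ket 1)"
proof -
  define c where "c = complex_of_real (sqrt 2 / 2)"
  have c: "cnj c * c = 1/2"
    unfolding c_def by (simp flip: of_real_mult)
  have cs: "cnj (c * s) * (c * s) = 1/2"
    using c s by (simp add: algebra_simps)
  define S :: "(nat \<times> nat) set" where "S = {0, 1} \<times> {n. \<phi> n \<noteq> 0}"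
  have "finite S"
    using \<open>\<phi> \<in> finspan_D\<close> by (simp add: S_def finspan_D_def)
  moreover have "\<And>x. x \<notin> S \<Longrightarrow> tensor (ket 0) \<phi> x = 0"
    and "\<And>x. x \<notin> S \<Longrightarrow> tensor (ket 1) \<phi> x = 0"
    by (auto simp: S_def tensor_def ket_def split: if_splits)
  ultimately show ?thesis
    using quadratic_form_rotation[OF T assms(3,4) _ _ _ c cs]
    unfolding Q_def tensor_rotated_ket c_def[symmetric] by simp
qed

lemma l2_inner_tensor_two_level:
  assumes "\<And>n. 1 < n \<Longrightarrow> \<psi> n = 0" "\<And>n. 1 < n \<Longrightarrow> \<phi> n = 0"
  shows "l2_inner (tensor \<psi> \<phi>) G = cnj (\<psi> 0 * \<phi> 0) * G (0,0) + cnj (\<psi> 0 * \<phi> 1) * G (0,1)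
      + cnj (\<psi> 1 * \<phi> 0) * G (1,0) + cnj (\<psi> 1 * \<phi> 1) * G (1,1)"
proof -
  have "l2_inner (tensor \<psi> \<phi>) G = (\<Sum>x\<in>{(0,0),(0,1),(1,0),(1,1)}. cnj (tensor \<psi> \<phi> x) * G x)"
  proof (rule l2_inner_finite_support)
    fix x :: "nat \<times> nat"
    assume "x \<notin> {(0,0),(0,1),(1,0),(1,1)}"
    then have "1 < fst x \<or> 1 < snd x"
      by (cases x) (auto simp: not_less le_Suc_eq)
    then show "tensor \<psi> \<phi> x = 0"
      using assms by (cases x) (auto simp: tensor_def)
  qed simp
  then show ?thesis
    by (simp add: tensor_def add.assoc)
qed

(* For unit vectors, d_L2 psi phi = <2H>_psi + <2H>_phi - 2 (<q1>_psi <q1>_phi + <q2>_psi <q2>_phi)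
   with 2H |m> = lam^2 (2m + 1) |m>; the values below are evaluated directly from the definitions. *)
lemmas L2_op_unfold = L2_op_def dq_op_def left_op_def right_op_def
  q1_op_def q2_op_def ann_op_def cre_op_def tensor_def

lemma of_real_sqrt2_squared: "complex_of_real (sqrt 2) * complex_of_real (sqrt 2) = 2"
  by (simp flip: of_real_mult)

lemma d_L2_ket0_ket0: "d_L2 lam (ket 0) (ket 0) = 2 * lam\<^sup>2"
  unfolding d_L2_def
  by (subst l2_inner_tensor_two_level)
    (auto simp: ket_def L2_op_unfold field_simps power2_eq_square of_real_sqrt2_squared)

lemma d_L2_ket1_ket1: "d_L2 lam (ket 1) (ket 1) = 6 * lam\<^sup>2"
  unfolding d_L2_def
  by (subst l2_inner_tensor_two_level)
    (auto simp: ket_def L2_op_unfold field_simps power2_eq_square of_real_sqrt2_squared)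

lemma d_L2_ket1_ket0: "d_L2 lam (ket 1) (ket 0) = 4 * lam\<^sup>2"
  unfolding d_L2_def
  by (subst l2_inner_tensor_two_level)
    (auto simp: ket_def L2_op_unfold field_simps power2_eq_square of_real_sqrt2_squared)

lemma d_L2_rotated_ket_rotated_ket:
  assumes "s * cnj s = 1"
  shows "d_L2 lam (rotated_ket s) (rotated_ket s) = 3 * lam\<^sup>2"
proof -
  have unit: "s * (cnj s * z) = z" for z
    using assms by (metis mult.assoc mult_1)
  show ?thesis
    unfolding d_L2_def
    by (subst l2_inner_tensor_two_level)
      (auto simp: ket_def rotated_ket_def L2_op_unfold field_simps power2_eq_square
        of_real_sqrt2_squared unit)
qed

lemma d_L2_rotated_ket_ket0:
  assumes "s * cnj s = 1"
  shows "d_L2 lam (rotated_ket s) (ket 0) = 3 * lam\<^sup>2"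
  unfolding d_L2_def
  by (subst l2_inner_tensor_two_level)
    (use assms in \<open>auto simp: ket_def rotated_ket_def L2_op_unfold field_simps power2_eq_square
      of_real_sqrt2_squared\<close>)

lemma d_L_mod_squared:
  assumes "d_L2 lam \<psi> \<phi> = complex_of_real (a * lam\<^sup>2)"
    and "d_L2 lam \<psi> \<psi> = complex_of_real (b * lam\<^sup>2)" "d_L2 lam \<phi> \<phi> = complex_of_real (c * lam\<^sup>2)"
    and "0 \<le> b" "0 \<le> c"
  shows "(d_L_mod lam \<psi> \<phi>)\<^sup>2 = \<bar>a - sqrt (b * c)\<bar> * lam\<^sup>2"
proof -
  have "d_L2 lam \<psi> \<psi> * d_L2 lam \<phi> \<phi> = complex_of_real (b * c * (lam\<^sup>2)\<^sup>2)"
    using assms by (simp add: power2_eq_square mult_ac)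
  moreover have "sqrt (b * c * (lam\<^sup>2)\<^sup>2) = sqrt (b * c) * lam\<^sup>2"
    by (simp only: real_sqrt_mult real_sqrt_abs abs_power2)
  ultimately have "csqrt (d_L2 lam \<psi> \<psi> * d_L2 lam \<phi> \<phi>) = complex_of_real (sqrt (b * c) * lam\<^sup>2)"
    using assms by (simp only: csqrt_of_real mult_nonneg_nonneg zero_le_power2)
  then have "d_L2 lam \<psi> \<phi> - csqrt (d_L2 lam \<psi> \<psi> * d_L2 lam \<phi> \<phi>)
      = complex_of_real ((a - sqrt (b * c)) * lam\<^sup>2)"
    using assms by (simp add: algebra_simps)
  then show ?thesis
    unfolding d_L_mod_def by (simp only: norm_of_real abs_mult abs_power2) simp
qed

lemma sqrt_3_less_2: "sqrt 3 < (2::real)"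
  using real_sqrt_less_mono[of 3 4] by simp

lemma sqrt_6_less_3: "sqrt 6 < (3::real)"
  using real_sqrt_less_mono[of 6 9] by (simp add: real_sqrt_eq_iff)

lemma sqrt_6_ne_1_plus_sqrt_3: "sqrt 6 \<noteq> 1 + sqrt (3::real)"
proof
  assume "sqrt 6 = 1 + sqrt (3::real)"
  then have "(sqrt 6)\<^sup>2 = (1 + sqrt (3::real))\<^sup>2"
    by simp
  then have "sqrt 3 = (1::real)"
    by (simp add: power2_eq_square algebra_simps)
  then show False
    by simp
qed

lemma d_L_mod_ket0_ket0: "(d_L_mod lam (ket 0) (ket 0))\<^sup>2 = 0"
  using d_L_mod_squared[of lam "ket 0" "ket 0" 2 2 2] d_L2_ket0_ket0 by simp

lemma d_L_mod_ket1_ket0: "(d_L_mod lam (ket 1) (ket 0))\<^sup>2 = (4 - 2 * sqrt 3) * lam\<^sup>2"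
proof -
  have "sqrt (6 * 2) = 2 * sqrt (3::real)"
    using real_sqrt_mult[of 4 3] by simp
  then show ?thesis
    using d_L_mod_squared[of lam "ket 1" "ket 0" 4 6 2] d_L2_ket1_ket0 d_L2_ket1_ket1 d_L2_ket0_ket0
      sqrt_3_less_2 by simp
qed

lemma d_L_mod_rotated_ket_ket0:
  assumes "s * cnj s = 1"
  shows "(d_L_mod lam (rotated_ket s) (ket 0))\<^sup>2 = (3 - sqrt 6) * lam\<^sup>2"
  using d_L_mod_squared[of lam "rotated_ket s" "ket 0" 3 3 2] assms d_L2_rotated_ket_ket0
    d_L2_rotated_ket_rotated_ket d_L2_ket0_ket0 sqrt_6_less_3 by simp

theorem mainTheorem1:
  fixes lam :: real
  assumes "lam > 0"
  shows "\<not> (\<exists>(Dom :: (nat \<times> nat \<Rightarrow> complex) set) T.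
            self_adjoint_on Dom T \<and> alg_tensor finspan_D \<subseteq> Dom \<and>
            (\<forall>\<psi>\<in>finspan_D. \<forall>\<phi>\<in>finspan_D. l2_norm \<psi> = 1 \<longrightarrow> l2_norm \<phi> = 1 \<longrightarrow>
               l2_inner (tensor \<psi> \<phi>) (T (tensor \<psi> \<phi>)) = complex_of_real ((d_L_mod lam \<psi> \<phi>)\<^sup>2)))"
proof
  assume "\<exists>(Dom :: (nat \<times> nat \<Rightarrow> complex) set) T.
            self_adjoint_on Dom T \<and> alg_tensor finspan_D \<subseteq> Dom \<and>
            (\<forall>\<psi>\<in>finspan_D. \<forall>\<phi>\<in>finspan_D. l2_norm \<psi> = 1 \<longrightarrow> l2_norm \<phi> = 1 \<longrightarrow>
               l2_inner (tensor \<psi> \<phi>) (T (tensor \<psi> \<phi>)) = complex_of_real ((d_L_mod lam \<psi> \<phi>)\<^sup>2))"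
  then obtain Dom :: "(nat \<times> nat \<Rightarrow> complex) set" and T
    where lin: "complex_linear_on Dom T" and sub: "alg_tensor finspan_D \<subseteq> Dom"
      and hyp: "\<And>\<psi>. \<psi> \<in> finspan_D \<Longrightarrow> l2_norm \<psi> = 1 \<Longrightarrow>
        l2_inner (tensor \<psi> (ket 0)) (T (tensor \<psi> (ket 0)))
          = complex_of_real ((d_L_mod lam \<psi> (ket 0))\<^sup>2)"
    using self_adjoint_on_imp_complex_linear_on ket_in_finspan_D l2_norm_ket by blast
  define Q where "Q \<psi> = l2_inner (tensor \<psi> (ket 0)) (T (tensor \<psi> (ket 0)))" for \<psi>
  have "Q (rotated_ket 1) + Q (rotated_ket (- 1)) = Q (ket 0) + Q (ket 1)"
    unfolding Q_def using sub
    by (intro quadratic_form_rotated_ket[OF lin]) (auto intro: tensor_in_alg_tensor ket_in_finspan_D)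
  moreover have "Q (rotated_ket s) = complex_of_real ((3 - sqrt 6) * lam\<^sup>2)" if "s * cnj s = 1" for s
    using that by (simp add: Q_def hyp rotated_ket_in_finspan_D l2_norm_rotated_ket d_L_mod_rotated_ket_ket0)
  moreover have "Q (ket 0) = 0" "Q (ket 1) = complex_of_real ((4 - 2 * sqrt 3) * lam\<^sup>2)"
    by (simp_all only: Q_def hyp ket_in_finspan_D l2_norm_ket d_L_mod_ket0_ket0 d_L_mod_ket1_ket0 of_real_0)
  ultimately have "complex_of_real (2 * (3 - sqrt 6) * lam\<^sup>2) = complex_of_real ((4 - 2 * sqrt 3) * lam\<^sup>2)"
    by (simp add: algebra_simps)
  then have "sqrt 6 = 1 + sqrt (3::real)"
    using \<open>lam > 0\<close> by (simp only: of_real_eq_iff) simp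
  with sqrt_6_ne_1_plus_sqrt_3 show False ..
qed

end
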